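(* Let $A\in M_n\otimes M_m$ be positive semi-definite. Then $A$ is entangled (i.e. $A\notin \mathbb V_1=M_n^+\otimes M_m^+$) if and only if there exists an exposed positive linear map $\phi:M_m\to M_n$ such that $\langle A,\phi\rangle<0$.
   Context: $M_k$ denotes the $k\times k$ complex matrices and $M_k^+$ its positive semi-definite elements; $\mathbb V_1=M_n^+\otimes M_m^+$ is the convex cone of separable positive semi-definite matrices in $M_n\otimes M_m$ (convex sums of $zz^*$ with $z$ a product vector). The bilinear pairing between $M_n\otimes M_m$ and the space $\mathcal L(M_m,M_n)$ of linear maps $M_m\to M_n$ is defined by $\langle y\otimes x,\phi\rangle=\mathrm{Tr}(\phi(x)y^{\mathrm t})$ for $x\in M_m$, $y\in M_n$, extended bilinearly. $\mathbb P_1$ is the cone of positive linear maps $M_m\to M_n$ (those sending positive semi-definite matrices to positive semi-definite matrices). For a face $F$ of $\mathbb P_1$, $F'=\{A\in\mathbb V_1:\langle A,\phi\rangle=0\ \forall \phi\in F\}$, and for a face $G$ of $\mathbb V_1$, $G'=\{\phi\in\mathbb P_1:\langle A,\phi\rangle=0\ \forall A\in G\}$. A positive map $\phi\ne 0$ is called exposed if the ray $L_\phi=\{\lambda\phi:\lambda\ge0\}$ satisfies $L_\phi=L_\phi''$, i.e. it generates an exposed ray of $\mathbb P_1$. *)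

theory Defs
  imports "HOL-Analysis.Analysis"
begin

text \<open>M_n \<otimes> M_m is identified with complex^('n \<times> 'm)^('n \<times> 'm) via the Kronecker
  convention (y \<otimes> x) at ((i,k),(j,l)) = y at (i,j) times x at (k,l).\<close>

definition cmscale :: "complex \<Rightarrow> complex^'k::finite^'k \<Rightarrow> complex^'k^'k" where
  "cmscale c X = (\<chi> i j. c * X$i$j)"

definition psd :: "complex^'k::finite^'k \<Rightarrow> bool" where
  "psd A \<longleftrightarrow> (\<forall>x::complex^'k.
      Im (\<Sum>i\<in>UNIV. cnj (x$i) * (A *v x)$i) = 0 \<and> Re (\<Sum>i\<in>UNIV. cnj (x$i) * (A *v x)$i) \<ge> 0)"

definition lin_map :: "(complex^'m::finite^'m \<Rightarrow> complex^'n::finite^'n) \<Rightarrow> bool" where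
  "lin_map f \<longleftrightarrow> (\<forall>X Y. f (X + Y) = f X + f Y) \<and> (\<forall>c X. f (cmscale c X) = cmscale c (f X))"

definition P1 :: "(complex^'m::finite^'m \<Rightarrow> complex^'n::finite^'n) set" where
  "P1 = {\<phi>. lin_map \<phi> \<and> (\<forall>X. psd X \<longrightarrow> psd (\<phi> X))}"

definition proj1 :: "complex^'k::finite \<Rightarrow> complex^'k^'k" where
  "proj1 z = (\<chi> a b. z$a * cnj (z$b))"

definition prodvec :: "complex^'n \<Rightarrow> complex^'m \<Rightarrow> complex^('n \<times> 'm)" where
  "prodvec \<xi> \<eta> = (\<chi> p. \<xi>$(fst p) * \<eta>$(snd p))"

text \<open>The cone V_1 of separable positive semi-definite matrices: finite sums of z z^*
  with z a product vector (nonnegative coefficients absorbed into z).\<close>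
definition V1 :: "(complex^('n::finite \<times> 'm::finite)^('n \<times> 'm)) set" where
  "V1 = {A. \<exists>(N::nat) \<xi> \<eta>. A = (\<Sum>r<N. proj1 (prodvec (\<xi> r) (\<eta> r)))}"

text \<open>Bilinear pairing: the bilinear extension of
  <y \<otimes> x, \<phi>> = Tr(\<phi>(x) y^t), written out via the block decomposition
  A = \<Sum>_{i,j} e_ij \<otimes> A_ij, giving <A,\<phi>> = \<Sum>_{i,j} (\<phi>(A_ij))_{ij}.\<close>
definition block :: "complex^('n::finite \<times> 'm::finite)^('n \<times> 'm) \<Rightarrow> 'n \<Rightarrow> 'n \<Rightarrow> complex^'m^'m" where
  "block A i j = (\<chi> k l. A$(i,k)$(j,l))"

definition pair :: "complex^('n::finite \<times> 'm::finite)^('n \<times> 'm) \<Rightarrow> (complex^'m^'m \<Rightarrow> complex^'n^'n) \<Rightarrow> complex" where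
  "pair A \<phi> = (\<Sum>i\<in>UNIV. \<Sum>j\<in>UNIV. (\<phi> (block A i j))$i$j)"

definition perpV :: "(complex^'m::finite^'m \<Rightarrow> complex^'n::finite^'n) set \<Rightarrow> (complex^('n \<times> 'm)^('n \<times> 'm)) set" where
  "perpV F = {A \<in> V1. \<forall>\<phi>\<in>F. pair A \<phi> = 0}"

definition perpP :: "(complex^('n::finite \<times> 'm::finite)^('n \<times> 'm)) set \<Rightarrow> (complex^'m^'m \<Rightarrow> complex^'n^'n) set" where
  "perpP G = {\<phi> \<in> P1. \<forall>A\<in>G. pair A \<phi> = 0}"

definition ray :: "(complex^'m::finite^'m \<Rightarrow> complex^'n::finite^'n) \<Rightarrow> (complex^'m^'m \<Rightarrow> complex^'n^'n) set" where
  "ray \<phi> = {(\<lambda>X. cmscale (complex_of_real t) (\<phi> X)) | t. t \<ge> 0}"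

definition exposed_map :: "(complex^'m::finite^'m \<Rightarrow> complex^'n::finite^'n) \<Rightarrow> bool" where
  "exposed_map \<phi> \<longleftrightarrow> \<phi> \<in> P1 \<and> \<phi> \<noteq> (\<lambda>X. 0) \<and>
     perpP (perpV (ray \<phi>) :: (complex^('n \<times> 'm)^('n \<times> 'm)) set) = ray \<phi>"

end

theory Submission
  imports Defs
begin

text \<open>Positive maps pair nonnegatively with separable matrices, which gives one direction.
  Conversely, by Hahn--Banach an entangled \<open>A\<close> is separated from the closed convex cone \<open>V1\<close> by a
  positive map, i.e. the open half-space \<open>Re \<langle>A, _\<rangle> < 0\<close> meets the cone of positive maps, viewed
  through Choi matrices. That cone is closed with the compact base of trace-one Choi matrices, so a
  Straszewicz-type argument applies: the point of the base farthest from a point far out in the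
  direction of \<open>A\<close> lies in the half-space and is exposed by a functional that is nonnegative on
  all positive maps. By Hahn--Banach again this functional is the pairing with a separable matrix
  \<open>A0\<close>, and \<open>A0\<close> witnesses that the ray through the point is exposed.\<close>

section \<open>Cones in Euclidean space\<close>

lemma separating_hyperplane_closed_cone:
  fixes K :: "'a::euclidean_space set"
  assumes "convex_cone K" "closed K" "x \<notin> K"
  obtains a where "inner a x < 0" "\<And>y. y \<in> K \<Longrightarrow> inner a y \<ge> 0"
proof -
  have conv: "convex K" and "0 \<in> K"
    using assms(1) by (auto simp: convex_cone_def convex_cone_contains_0)
  obtain a b where ab: "inner a x < b" "\<And>y. y \<in> K \<Longrightarrow> inner a y > b"
    using separating_hyperplane_closed_point[OF conv assms(2,3)] by blast
  have "b < 0" using ab(2)[OF \<open>0 \<in> K\<close>] by simp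
  have "inner a y \<ge> 0" if "y \<in> K" for y
  proof (rule ccontr)
    assume "\<not> inner a y \<ge> 0"
    \<comment> \<open>rescale \<open>y\<close> within the cone onto the hyperplane \<open>inner a _ = b\<close>\<close>
    then have "(b / inner a y) *\<^sub>R y \<in> K"
      using \<open>b < 0\<close> assms(1) that by (auto intro: convex_cone_scaleR simp: divide_nonpos_neg)
    then show False using ab(2) \<open>\<not> inner a y \<ge> 0\<close> by fastforce
  qed
  moreover have "inner a x < 0" using ab(1) \<open>b < 0\<close> by simp
  ultimately show ?thesis using that by blast
qed

lemma farthest_point_inequality:
  fixes c cs p :: "'a::real_inner"
  assumes "norm (c - p) \<le> norm (cs - p)"
  shows "norm (c - cs) ^ 2 \<le> 2 * inner (cs - p) (cs - c)"
proof -
  have "norm (c - p) ^ 2 = norm (c - cs) ^ 2 + 2 * inner (c - cs) (cs - p) + norm (cs - p) ^ 2"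
    using dot_norm[of "c - cs" "cs - p"] by simp
  moreover have "norm (c - p) ^ 2 \<le> norm (cs - p) ^ 2"
    using assms by (simp add: power_mono)
  ultimately show ?thesis by (simp add: inner_diff_left inner_diff_right inner_commute)
qed

lemma cone_linear_lower_bound:
  fixes C :: "'a::euclidean_space set"
  assumes "closed C" "conic C" and pos: "\<And>c. c \<in> C \<Longrightarrow> c \<noteq> 0 \<Longrightarrow> inner e c > 0"
  obtains \<delta> where "\<delta> > 0" "\<And>c. c \<in> C \<Longrightarrow> \<delta> * norm c \<le> inner e c"
proof (cases "C \<subseteq> {0}")
  case True
  then have "1 * norm c \<le> inner e c" if "c \<in> C" for c using that by auto
  then show ?thesis using that[of 1] by simp
next
  case False
  define T where "T = C \<inter> sphere 0 1"
  have normalized: "(1 / norm c) *\<^sub>R c \<in> T" if "c \<in> C" "c \<noteq> 0" for c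
    using that \<open>conic C\<close> unfolding T_def by (simp add: conicD)
  then have "T \<noteq> {}" using False by blast
  moreover have "compact T" unfolding T_def using \<open>closed C\<close> by (intro closed_Int_compact compact_sphere)
  ultimately obtain c0 where c0: "c0 \<in> T" "\<And>c. c \<in> T \<Longrightarrow> inner e c0 \<le> inner e c"
    using continuous_attains_inf[of T "inner e"] continuous_on_inner[OF continuous_on_const continuous_on_id]
    by blast
  have "inner e c0 > 0" using c0(1) pos unfolding T_def by (metis IntD1 IntD2 mem_sphere_0 norm_zero zero_neq_one)
  moreover have "inner e c0 * norm c \<le> inner e c" if "c \<in> C" for c
  proof (cases "c = 0")
    case False
    have "inner e c0 \<le> inner e ((1 / norm c) *\<^sub>R c)" using c0(2) normalized[OF that False] .
    then show ?thesis using False by (simp add: field_simps)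
  qed simp
  ultimately show ?thesis by (rule that)
qed

lemma compact_cone_slice:
  fixes C :: "'a::euclidean_space set"
  assumes "closed C" "conic C" "\<And>c. c \<in> C \<Longrightarrow> c \<noteq> 0 \<Longrightarrow> inner e c > 0"
  shows "compact (C \<inter> {c. inner e c = 1})"
proof -
  obtain \<delta> where \<delta>: "\<delta> > 0" "\<And>c. c \<in> C \<Longrightarrow> \<delta> * norm c \<le> inner e c"
    using cone_linear_lower_bound[OF assms] by blast
  have "norm c \<le> 1 / \<delta>" if "c \<in> C \<inter> {c. inner e c = 1}" for c
    using \<delta>(2)[of c] \<delta>(1) that by (simp add: field_simps)
  then have "bounded (C \<inter> {c. inner e c = 1})" by (auto simp: bounded_iff)
  then show ?thesis
    using assms(1) by (simp add: compact_eq_bounded_closed closed_Int closed_hyperplane)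
qed

lemma farthest_point_exposes_ray:
  fixes C :: "'a::real_inner set"
  assumes "conic C" and pos: "\<And>c. c \<in> C \<Longrightarrow> c \<noteq> 0 \<Longrightarrow> inner e c > 0"
    and cs: "cs \<in> C" "inner e cs = 1"
    and far: "\<And>c. c \<in> C \<Longrightarrow> inner e c = 1 \<Longrightarrow> norm (c - p) \<le> norm (cs - p)"
  defines "w \<equiv> inner (cs - p) cs *\<^sub>R e - (cs - p)"
  shows "inner w cs = 0"
    and "\<And>c. c \<in> C \<Longrightarrow> inner w c \<ge> 0"
    and "\<And>c. c \<in> C \<Longrightarrow> inner w c = 0 \<Longrightarrow> c = inner e c *\<^sub>R cs"
proof -
  have slice: "norm (c - cs) ^ 2 \<le> 2 * inner w c" if "c \<in> C" "inner e c = 1" for c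
    using farthest_point_inequality[OF far[OF that]] that
    by (simp add: w_def inner_diff_left inner_diff_right inner_commute)
  have scaled: "norm ((1 / inner e c) *\<^sub>R c - cs) ^ 2 \<le> 2 * inner w c / inner e c"
    if "c \<in> C" "c \<noteq> 0" for c
    using slice[of "(1 / inner e c) *\<^sub>R c"] pos[OF that] \<open>conic C\<close> that(1)
    by (simp add: conicD)
  have "inner w cs = inner (cs - p) cs * inner e cs - inner (cs - p) cs"
    unfolding w_def inner_diff_left inner_scaleR_left ..
  then show "inner w cs = 0" using cs(2) by simp
  show "inner w c \<ge> 0" if "c \<in> C" for c
  proof (cases "c = 0")
    case False
    have "0 \<le> 2 * inner w c / inner e c"
      using scaled[OF that False] by (meson order_trans zero_le_power2)
    then show ?thesis using pos[OF that False] by (simp add: zero_le_divide_iff)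
  qed simp
  show "c = inner e c *\<^sub>R cs" if "c \<in> C" "inner w c = 0" for c
  proof (cases "c = 0")
    case False
    then have "(1 / inner e c) *\<^sub>R c = cs" using scaled[OF that(1) False] that(2) by simp
    then show ?thesis using pos[OF that(1) False] by auto
  qed simp
qed

lemma exposed_ray_in_open_halfspace:
  fixes C :: "'a::euclidean_space set"
  assumes "closed C" "conic C" and pos: "\<And>c. c \<in> C \<Longrightarrow> c \<noteq> 0 \<Longrightarrow> inner e c > 0"
    and "c1 \<in> C" "inner a c1 < 0"
  obtains cs w where "cs \<in> C" "inner e cs = 1" "inner a cs < 0" "inner w cs = 0"
    "\<And>c. c \<in> C \<Longrightarrow> inner w c \<ge> 0" "\<And>c. c \<in> C \<Longrightarrow> inner w c = 0 \<Longrightarrow> c = inner e c *\<^sub>R cs"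
proof -
  define K where "K = C \<inter> {c. inner e c = 1}"
  have "compact K" unfolding K_def using assms(1-3) by (rule compact_cone_slice)
  then obtain R where R: "R > 0" "\<And>c. c \<in> K \<Longrightarrow> norm c \<le> R"
    using compact_imp_bounded bounded_pos by metis
  have "c1 \<noteq> 0" using \<open>inner a c1 < 0\<close> by auto
  define c1' where "c1' = (1 / inner e c1) *\<^sub>R c1"
  have "c1' \<in> K" and m: "inner a c1' < 0"
    using pos[OF \<open>c1 \<in> C\<close> \<open>c1 \<noteq> 0\<close>] \<open>conic C\<close> \<open>c1 \<in> C\<close> \<open>inner a c1 < 0\<close>
    by (auto simp: K_def c1'_def conicD divide_neg_pos)
  \<comment> \<open>viewed from far out along \<open>a\<close>, the farthest point of \<open>K\<close> must lie on the negative side of \<open>a\<close>\<close>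
  define t where "t = R ^ 2 / (- inner a c1') + 1"
  have "R ^ 2 / (- inner a c1') \<ge> 0" using m by (intro divide_nonneg_pos) auto
  then have t_pos: "t > 0" by (simp add: t_def)
  have "t * (- inner a c1') = R ^ 2 - inner a c1'" using m by (simp add: t_def field_simps)
  then have t_large: "R ^ 2 \<le> - (t * inner a c1')" using m by simp
  obtain cs where cs: "cs \<in> K" "\<And>c. c \<in> K \<Longrightarrow> dist (t *\<^sub>R a) c \<le> dist (t *\<^sub>R a) cs"
    using distance_attains_sup[OF \<open>compact K\<close>, of "t *\<^sub>R a"] \<open>c1' \<in> K\<close> by blast
  have far: "norm (c - t *\<^sub>R a) \<le> norm (cs - t *\<^sub>R a)" if "c \<in> K" for c
    using cs(2)[OF that] by (simp add: dist_norm norm_minus_commute)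
  have "inner a cs < 0"
  proof -
    have "norm (c1' - t *\<^sub>R a) ^ 2 \<le> norm (cs - t *\<^sub>R a) ^ 2"
      using far[OF \<open>c1' \<in> K\<close>] by (simp add: power_mono)
    then have "2 * (t * inner a cs) \<le> norm cs ^ 2 - norm c1' ^ 2 + 2 * (t * inner a c1')"
      by (simp add: power2_norm_eq_inner inner_diff_left inner_diff_right inner_commute algebra_simps)
    moreover have "norm cs ^ 2 \<le> R ^ 2" using R(2)[OF \<open>cs \<in> K\<close>] norm_ge_zero by (rule power_mono)
    moreover have "t * inner a c1' < 0" using t_pos m by (rule mult_pos_neg)
    ultimately have "t * inner a cs < 0" using t_large zero_le_power2[of "norm c1'"] by linarith
    then show ?thesis using t_pos by (simp add: mult_less_0_iff)
  qed
  moreover note farthest_point_exposes_ray[OF \<open>conic C\<close> pos, of cs "t *\<^sub>R a"]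
  ultimately show ?thesis using that cs(1) far unfolding K_def by blast
qed

section \<open>Positive semidefinite matrices\<close>

definition sform :: "complex^'k::finite^'k \<Rightarrow> complex^'k \<Rightarrow> complex^'k \<Rightarrow> complex" where
  "sform M x y = (\<Sum>i\<in>UNIV. \<Sum>j\<in>UNIV. cnj (x$i) * M$i$j * y$j)"

definition hermitian :: "complex^'k::finite^'k \<Rightarrow> bool" where
  "hermitian M \<longleftrightarrow> (\<forall>p q. M$q$p = cnj (M$p$q))"

lemma psd_iff_sform: "psd M \<longleftrightarrow> (\<forall>x. Im (sform M x x) = 0 \<and> Re (sform M x x) \<ge> 0)"
  unfolding psd_def sform_def matrix_vector_mult_def by (simp add: sum_distrib_left mult.assoc)

lemma psd_sformD: "psd M \<Longrightarrow> Im (sform M x x) = 0" "psd M \<Longrightarrow> Re (sform M x x) \<ge> 0"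
  by (simp_all add: psd_iff_sform)

lemma hermitianD: "hermitian M \<Longrightarrow> cnj (M$p$q) = M$q$p"
  unfolding hermitian_def by (metis complex_cnj_cnj)

lemma sform_add_left: "sform M (x + y) z = sform M x z + sform M y z"
  unfolding sform_def by (simp add: algebra_simps sum.distrib)

lemma sform_add_right: "sform M x (y + z) = sform M x y + sform M x z"
  unfolding sform_def by (simp add: algebra_simps sum.distrib)

lemma sform_axis_left: "sform M (axis k a) y = cnj a * (M *v y)$k"
proof -
  have "sform M (axis k a) y = (\<Sum>i\<in>UNIV. if i = k then \<Sum>j\<in>UNIV. cnj a * M$k$j * y$j else 0)"
    unfolding sform_def by (rule sum.cong) (auto simp: axis_def)
  then show ?thesis by (simp add: matrix_vector_mult_def sum_distrib_left mult.assoc)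
qed

lemma sform_axis_right: "sform M x (axis l b) = (\<Sum>i\<in>UNIV. cnj (x$i) * M$i$l) * b"
proof -
  have "sform M x (axis l b) = (\<Sum>i\<in>UNIV. \<Sum>j\<in>UNIV. if j = l then cnj (x$i) * M$i$l * b else 0)"
    unfolding sform_def by (intro sum.cong) (auto simp: axis_def)
  then show ?thesis by (simp add: sum_distrib_right)
qed

lemma sform_axis_axis: "sform M (axis k a) (axis l b) = cnj a * M$k$l * b"
proof -
  have "(\<Sum>i\<in>UNIV. cnj (axis k a $ i) * M$i$l) = (\<Sum>i\<in>UNIV. if i = k then cnj a * M$k$l else 0)"
    by (rule sum.cong) (auto simp: axis_def)
  then show ?thesis by (simp add: sform_axis_right)
qed

lemmas sform_axis_simps = sform_add_left sform_add_right sform_axis_axis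

lemma psd_hermitian: assumes "psd M" shows "hermitian M"
  unfolding hermitian_def
proof (intro allI)
  fix p q
  have "Im (sform M (axis p 1 + axis q 1) (axis p 1 + axis q 1)) = 0"
    "Im (sform M (axis p 1 + axis q \<i>) (axis p 1 + axis q \<i>)) = 0"
    "Im (sform M (axis p 1) (axis p 1)) = 0" "Im (sform M (axis q 1) (axis q 1)) = 0"
    using assms by (simp_all add: psd_sformD)
  then show "M$q$p = cnj (M$p$q)"
    by (simp add: sform_axis_simps complex_eq_iff)
qed

lemma sform_diag_eq_0_imp_zero: assumes "\<And>x. sform M x x = 0" shows "M = 0"
proof -
  have "M$p$q = 0" for p q
  proof -
    have "sform M (axis p 1 + axis q 1) (axis p 1 + axis q 1) = 0"
      "sform M (axis p 1 + axis q \<i>) (axis p 1 + axis q \<i>) = 0"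
      "sform M (axis p 1) (axis p 1) = 0" "sform M (axis q 1) (axis q 1) = 0"
      using assms by blast+
    then show ?thesis by (simp add: sform_axis_simps complex_eq_iff)
  qed
  then show ?thesis by (simp add: vec_eq_iff)
qed

lemma psd_diag_eq_0_imp_row_eq_0: assumes "psd M" "M$s$s = 0" shows "M$s$l = 0"
proof (rule ccontr)
  define u where "u = M$s$l"
  define q where "q = Re u ^ 2 + Im u ^ 2"
  assume "M$s$l \<noteq> 0"
  then have "q > 0" unfolding q_def u_def by (simp add: complex_eq_iff sum_power2_gt_zero_iff)
  have "M$l$s = cnj u" unfolding u_def using psd_hermitian[OF assms(1)] by (simp add: hermitianD)
  then have bound: "2 * t * q \<le> Re (M$l$l)" for t :: real
    using psd_sformD(2)[OF assms(1), of "axis s (- (of_real t * u)) + axis l 1"] assms(2)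
    by (simp add: sform_axis_simps u_def[symmetric] q_def algebra_simps power2_eq_square)
  have "2 * ((\<bar>Re (M$l$l)\<bar> + 1) / (2 * q)) * q = \<bar>Re (M$l$l)\<bar> + 1"
    using \<open>q > 0\<close> by simp
  then show False
    using bound[of "(\<bar>Re (M$l$l)\<bar> + 1) / (2 * q)"] by linarith
qed

lemma psd_eq_0_if_diag_eq_0: assumes "psd M" "\<And>i. M$i$i = 0" shows "M = 0"
  using psd_diag_eq_0_imp_row_eq_0[OF assms(1) assms(2)] by (simp add: vec_eq_iff)

lemma sform_proj1: "sform (proj1 v) x y = cnj (\<Sum>j\<in>UNIV. cnj (v$j) * x$j) * (\<Sum>j\<in>UNIV. cnj (v$j) * y$j)"
  unfolding sform_def proj1_def by (simp add: sum_product mult_ac)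

lemma cnj_mult_self: "cnj z * z = of_real (cmod z ^ 2)"
  using complex_norm_square[of z] by (simp add: mult.commute)

lemma psd_proj1: "psd (proj1 v)"
  unfolding psd_iff_sform sform_proj1 cnj_mult_self by simp

lemma hermitian_proj1: "hermitian (proj1 z)"
  unfolding hermitian_def proj1_def by simp

lemma sform_diff: "sform (M - N) x y = sform M x y - sform N x y"
  unfolding sform_def by (simp add: algebra_simps sum_subtractf)

lemma sform_sum: "sform (\<Sum>r\<in>S. M r) x y = (\<Sum>r\<in>S. sform (M r) x y)"
  by (induction S rule: infinite_finite_induct) (auto simp: sform_def algebra_simps sum.distrib)

lemma hermitian_sform_swap: "hermitian M \<Longrightarrow> sform M y x = cnj (sform M x y)"
  unfolding sform_def by (subst sum.swap) (simp add: hermitianD mult_ac)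

lemma hermitian_diag_real: "hermitian M \<Longrightarrow> M$k$k = of_real (Re (M$k$k))"
  unfolding hermitian_def by (metis complex_cnj_cnj complex_eq_iff cnj.simps(2) Im_complex_of_real Re_complex_of_real neg_equal_zero)

lemma psd_diag_nonneg: "psd M \<Longrightarrow> Re (M$k$k) \<ge> 0"
  using psd_sformD(2)[of M "axis k 1"] by (simp add: sform_axis_axis)

lemma psd_row_Cauchy_Schwarz:
  assumes psd: "psd X" and pos: "Re (X$s$s) > 0"
  shows "cmod ((X *v x)$s) ^ 2 \<le> Re (X$s$s) * Re (sform X x x)"
proof -
  define g where "g = (X *v x)$s"
  define d where "d = Re (X$s$s)"
  have herm: "hermitian X" using psd by (rule psd_hermitian)
  have Xss: "X$s$s = of_real d" unfolding d_def by (rule hermitian_diag_real[OF herm])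
  have g_left: "sform X (axis s b) x = cnj b * g" for b
    by (simp add: sform_axis_left g_def)
  have g_right: "sform X x (axis s b) = b * cnj g" for b
    using hermitian_sform_swap[OF herm, of x "axis s b"] by (simp add: sform_axis_left g_def)
  \<comment> \<open>complete the square: shift \<open>x\<close> along coordinate \<open>s\<close> by \<open>-g/d\<close>\<close>
  have "0 \<le> Re (sform X (x + axis s (- g / of_real d)) (x + axis s (- g / of_real d)))"
    using psd by (rule psd_sformD)
  also have "\<dots> = Re (sform X x x) - (Re g ^ 2 + Im g ^ 2) / d"
    using pos unfolding d_def[symmetric]
    by (simp add: sform_add_left sform_add_right g_left sform_axis_axis g_right Xss
        power2_eq_square field_simps)
  finally show ?thesis
    using pos unfolding g_def[symmetric] d_def[symmetric] by (simp add: cmod_power2 field_simps)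
qed

lemma sum_lessThan_Suc_fun_upd: "(\<Sum>r<Suc N. f ((g(N := x)) r)) = (\<Sum>r<N. f (g r)) + f x"
  unfolding sum.lessThan_Suc by (auto intro!: sum.cong)

lemma psd_minus_column_proj1:
  fixes X :: "complex^'k::finite^'k"
  assumes psd: "psd X" and pos: "Re (X$s$s) > 0"
  defines "v \<equiv> (\<chi> k. X$k$s / of_real (sqrt (Re (X$s$s))))"
  shows "psd (X - proj1 v)" and "(X - proj1 v)$s$l = 0" and "(X - proj1 v)$l$s = 0"
proof -
  define d where "d = Re (X$s$s)"
  define c :: complex where "c = of_real (sqrt d)"
  have herm: "hermitian X" using psd by (rule psd_hermitian)
  have Xss: "X$s$s = of_real d" unfolding d_def by (rule hermitian_diag_real[OF herm])
  have cc: "cnj c * c = of_real d" and c0: "c \<noteq> 0"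
    using pos unfolding c_def d_def by (simp_all flip: of_real_mult)
  have v: "v = (\<chi> k. X$k$s / c)" unfolding v_def c_def d_def ..
  have v_inner: "(\<Sum>j\<in>UNIV. cnj (v$j) * x$j) = (X *v x)$s / cnj c" for x
    unfolding v matrix_vector_mult_def
    by (simp add: hermitianD[OF herm] sum_divide_distrib)
  show "psd (X - proj1 v)"
    unfolding psd_iff_sform
  proof
    fix x
    define g where "g = (X *v x)$s"
    have "sform (X - proj1 v) x x = sform X x x - cnj g * g / (cnj c * c)"
      unfolding sform_diff sform_proj1 v_inner g_def by simp
    also have "\<dots> = sform X x x - of_real (cmod g ^ 2 / d)"
      unfolding cc unfolding cnj_mult_self by simp
    finally have "sform (X - proj1 v) x x = sform X x x - of_real (cmod g ^ 2 / d)" .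
    moreover have "cmod g ^ 2 / d \<le> Re (sform X x x)"
      using psd_row_Cauchy_Schwarz[OF psd pos] pos unfolding g_def d_def by (simp add: field_simps)
    ultimately show "Im (sform (X - proj1 v) x x) = 0 \<and> Re (sform (X - proj1 v) x x) \<ge> 0"
      using psd by (simp add: psd_sformD)
  qed
  show "(X - proj1 v)$s$l = 0"
    using cc c0 pos unfolding d_def[symmetric] by (simp add: v proj1_def hermitianD[OF herm] Xss field_simps)
  show "(X - proj1 v)$l$s = 0"
    using cc c0 pos unfolding d_def[symmetric] by (simp add: v proj1_def Xss field_simps)
qed

lemma psd_eq_sum_proj1:
  fixes X :: "complex^'k::finite^'k"
  assumes "psd X"
  shows "\<exists>(N::nat) \<eta>. X = (\<Sum>r<N. proj1 (\<eta> r))"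
proof -
  have "\<forall>X::complex^'k^'k. psd X \<and> (\<forall>k l. k \<notin> S \<or> l \<notin> S \<longrightarrow> X$k$l = 0)
          \<longrightarrow> (\<exists>(N::nat) \<eta>. X = (\<Sum>r<N. proj1 (\<eta> r)))" for S :: "'k set"
    using finite[of S]
  proof (induction S rule: finite_induct)
    case empty
    have "(0::complex^'k^'k) = (\<Sum>r<(0::nat). proj1 (\<eta> r))" for \<eta> by simp
    moreover have "X = 0" if "\<forall>k l. k \<notin> {} \<or> l \<notin> {} \<longrightarrow> X$k$l = 0" for X :: "complex^'k^'k"
      using that by (simp add: vec_eq_iff)
    ultimately show ?case by blast
  next
    case (insert s S)
    show ?case
    proof (intro allI impI)
      fix X :: "complex^'k^'k"
      assume X: "psd X \<and> (\<forall>k l. k \<notin> insert s S \<or> l \<notin> insert s S \<longrightarrow> X$k$l = 0)"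
      then have psd: "psd X" by blast
      have "Re (X$s$s) \<ge> 0" using psd by (rule psd_diag_nonneg)
      then consider "Re (X$s$s) = 0" | "Re (X$s$s) > 0" by linarith
      then show "\<exists>(N::nat) \<eta>. X = (\<Sum>r<N. proj1 (\<eta> r))"
      proof cases
        case 1
        then have "X$s$s = 0"
          using hermitian_diag_real[OF psd_hermitian[OF psd]] by (metis of_real_0)
        then have row: "X$s$l = 0" and column: "X$l$s = 0" for l
          using psd_diag_eq_0_imp_row_eq_0[OF psd] hermitianD[OF psd_hermitian[OF psd]]
          by (metis complex_cnj_zero)+
        have "X$k$l = 0" if "k \<notin> S \<or> l \<notin> S" for k l
        proof (cases "k = s \<or> l = s")
          case True then show ?thesis using row column by blast
        next
          case False then show ?thesis using X that by blast
        qed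
        then show ?thesis using insert.IH psd by blast
      next
        case 2
        define v where "v = (\<chi> k. X$k$s / of_real (sqrt (Re (X$s$s))))"
        have v_outside: "v$k = 0" if "k \<notin> insert s S" for k using X that by (simp add: v_def)
        have "(X - proj1 v)$k$l = 0" if "k \<notin> S \<or> l \<notin> S" for k l
        proof (cases "k = s \<or> l = s")
          case True then show ?thesis
            using psd_minus_column_proj1(2,3)[OF psd 2] unfolding v_def by blast
        next
          case False
          then have "X$k$l = 0" "v$k = 0 \<or> v$l = 0" using X that v_outside by blast+
          then show ?thesis by (auto simp: proj1_def)
        qed
        then obtain N :: nat and \<eta> where "X - proj1 v = (\<Sum>r<N. proj1 (\<eta> r))"
          using insert.IH psd_minus_column_proj1(1)[OF psd 2] unfolding v_def by blast
        then have "X = (\<Sum>r<Suc N. proj1 ((\<eta>(N := v)) r))"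
          unfolding sum_lessThan_Suc_fun_upd by (simp add: algebra_simps)
        then show ?thesis by blast
      qed
    qed
  qed
  then show ?thesis using assms by blast
qed

section \<open>Choi matrices\<close>

definition matrix_unit :: "'k::finite \<Rightarrow> 'k \<Rightarrow> complex^'k^'k" where
  "matrix_unit k l = (\<chi> a b. if a = k \<and> b = l then 1 else 0)"

definition choi :: "(complex^'m::finite^'m \<Rightarrow> complex^'n::finite^'n) \<Rightarrow> complex^('n \<times> 'm)^('n \<times> 'm)" where
  "choi \<phi> = (\<chi> p q. \<phi> (matrix_unit (snd p) (snd q)) $ fst p $ fst q)"

definition choi_map :: "complex^('n::finite \<times> 'm::finite)^('n \<times> 'm) \<Rightarrow> complex^'m^'m \<Rightarrow> complex^'n^'n" where
  "choi_map c X = (\<chi> i j. \<Sum>k\<in>UNIV. \<Sum>l\<in>UNIV. X$k$l * c$(i,k)$(j,l))"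

definition tr_pair :: "complex^'p::finite^'p \<Rightarrow> complex^'p^'p \<Rightarrow> complex" where
  "tr_pair B c = (\<Sum>p\<in>UNIV. \<Sum>q\<in>UNIV. B$p$q * c$p$q)"

definition adjoint :: "complex^'k::finite^'k \<Rightarrow> complex^'k^'k" where
  "adjoint M = (\<chi> k l. cnj (M$l$k))"

definition vcnj :: "complex^'k::finite \<Rightarrow> complex^'k" where
  "vcnj x = (\<chi> i. cnj (x$i))"

lemma vcnj_vcnj [simp]: "vcnj (vcnj x) = x"
  by (simp add: vcnj_def vec_eq_iff)

lemma sum_UNIV_prod: "(\<Sum>p\<in>(UNIV::('a::finite \<times> 'b::finite) set). f p) = (\<Sum>i\<in>UNIV. \<Sum>k\<in>UNIV. f (i,k))"
  by (simp add: sum.cartesian_product)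

lemma sum_sum_delta:
  "(\<Sum>k\<in>(UNIV::'a::finite set). \<Sum>l\<in>(UNIV::'b::finite set). if k = a \<and> l = b then f k l else 0) = f a b"
proof -
  have "(\<Sum>l\<in>UNIV. if k = a \<and> l = b then f k l else 0) = (if k = a then f k b else 0)" for k
    by (cases "k = a") simp_all
  then show ?thesis by simp
qed

lemma lin_map_0: "lin_map \<phi> \<Longrightarrow> \<phi> 0 = 0"
  unfolding lin_map_def by (metis add_cancel_right_right add_0)

lemma lin_map_sum: "lin_map \<phi> \<Longrightarrow> \<phi> (\<Sum>x\<in>S. f x) = (\<Sum>x\<in>S. \<phi> (f x))"
  by (induction S rule: infinite_finite_induct) (auto simp: lin_map_0 lin_map_def)

lemma matrix_unit_expansion: "X = (\<Sum>k\<in>UNIV. \<Sum>l\<in>UNIV. cmscale (X$k$l) (matrix_unit k l))"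
proof -
  have "(\<Sum>k\<in>UNIV. \<Sum>l\<in>UNIV. cmscale (X$k$l) (matrix_unit k l))$a$b
          = (\<Sum>k\<in>UNIV. \<Sum>l\<in>UNIV. if k = a \<and> l = b then X$k$l else 0)" for a b
    by (auto simp: cmscale_def matrix_unit_def intro!: sum.cong)
  then show ?thesis by (simp add: vec_eq_iff sum_sum_delta)
qed

lemma choi_map_choi: assumes "lin_map \<phi>" shows "choi_map (choi \<phi>) = \<phi>"
proof
  fix X
  have "\<phi> X = (\<Sum>k\<in>UNIV. \<Sum>l\<in>UNIV. cmscale (X$k$l) (\<phi> (matrix_unit k l)))"
    by (subst matrix_unit_expansion[of X]) (use assms in \<open>simp add: lin_map_sum lin_map_def\<close>)
  then show "choi_map (choi \<phi>) X = \<phi> X"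
    by (simp add: vec_eq_iff choi_map_def choi_def cmscale_def)
qed

lemma lin_map_choi_map: "lin_map (choi_map c)"
  unfolding lin_map_def choi_map_def cmscale_def
  by (simp add: vec_eq_iff algebra_simps sum.distrib sum_distrib_left)

lemma choi_choi_map: "choi (choi_map c) = c"
proof -
  have "(\<Sum>k\<in>UNIV. \<Sum>l\<in>UNIV. matrix_unit b d $k$l * c$(a,k)$(e,l)) = c$(a,b)$(e,d)" for a b e d
    by (simp add: matrix_unit_def if_distrib[of "\<lambda>x. x * _"] sum_sum_delta cong: if_cong)
  then show ?thesis by (simp add: vec_eq_iff choi_def choi_map_def)
qed

lemma pair_choi_map: "pair A (choi_map c) = tr_pair A c"
  unfolding pair_def tr_pair_def choi_map_def block_def sum_UNIV_prod
  by simp (rule sum.cong[OF refl], rule sum.swap)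

lemma cnj_sform: "cnj (sform M x y) = sform (adjoint M) y x"
  unfolding sform_def adjoint_def by (subst sum.swap) (simp add: mult_ac)

lemma choi_map_proj1_entry: "choi_map c (proj1 \<eta>) $ i $ j = sform (block c i j) (vcnj \<eta>) (vcnj \<eta>)"
  unfolding choi_map_def proj1_def sform_def block_def vcnj_def by (simp add: mult_ac)

lemma sform_choi_map_proj1:
  "sform (choi_map c (proj1 \<eta>)) x x = tr_pair (proj1 (prodvec (vcnj x) \<eta>)) c"
proof -
  have "sform (choi_map c (proj1 \<eta>)) x x = (\<Sum>i\<in>UNIV. \<Sum>j\<in>UNIV. \<Sum>k\<in>UNIV. \<Sum>l\<in>UNIV.
      cnj (x$i) * x$j * \<eta>$k * cnj (\<eta>$l) * c$(i,k)$(j,l))"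
    unfolding sform_def choi_map_def proj1_def
    by (simp add: sum_distrib_left sum_distrib_right mult_ac)
  also have "\<dots> = (\<Sum>i\<in>UNIV. \<Sum>k\<in>UNIV. \<Sum>j\<in>UNIV. \<Sum>l\<in>UNIV.
      cnj (x$i) * x$j * \<eta>$k * cnj (\<eta>$l) * c$(i,k)$(j,l))"
    by (rule sum.cong[OF refl], rule sum.swap)
  also have "\<dots> = tr_pair (proj1 (prodvec (vcnj x) \<eta>)) c"
    unfolding tr_pair_def proj1_def prodvec_def vcnj_def sum_UNIV_prod
    by (simp add: mult_ac)
  finally show ?thesis .
qed

lemma tr_pair_real: assumes "hermitian B" "hermitian c" shows "tr_pair B c \<in> \<real>"
proof -
  have "cnj (tr_pair B c) = (\<Sum>p\<in>UNIV. \<Sum>q\<in>UNIV. B$q$p * c$q$p)"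
    unfolding tr_pair_def by (simp add: hermitianD[OF assms(1)] hermitianD[OF assms(2)])
  also have "\<dots> = tr_pair B c" unfolding tr_pair_def by (rule sum.swap)
  finally show ?thesis by (metis Reals_cnj_iff)
qed

lemma choi_map_sum: "choi_map c (\<Sum>r\<in>S. X r) = (\<Sum>r\<in>S. choi_map c (X r))"
  by (rule lin_map_sum[OF lin_map_choi_map])

lemma positive_choi_map_imp_hermitian:
  assumes "choi_map c \<in> P1" shows "hermitian c"
proof -
  have psd: "psd (choi_map c (proj1 \<eta>))" for \<eta>
    using assms psd_proj1 unfolding P1_def by blast
  have "block c j i = adjoint (block c i j)" for i j
  proof -
    have "sform (block c j i - adjoint (block c i j)) y y = 0" for y
    proof -
      have "sform (block c j i) y y = choi_map c (proj1 (vcnj y)) $ j $ i"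
        unfolding choi_map_proj1_entry vcnj_vcnj ..
      also have "\<dots> = cnj (choi_map c (proj1 (vcnj y)) $ i $ j)"
        by (rule hermitianD[OF psd_hermitian[OF psd], symmetric])
      also have "\<dots> = sform (adjoint (block c i j)) y y"
        unfolding choi_map_proj1_entry vcnj_vcnj cnj_sform ..
      finally show ?thesis by (simp add: sform_diff)
    qed
    then show ?thesis using sform_diag_eq_0_imp_zero by fastforce
  qed
  then show ?thesis
    unfolding hermitian_def by (metis (no_types) adjoint_def block_def prod.collapse vec_lambda_beta)
qed

lemma positive_choi_map_iff:
  "choi_map c \<in> P1 \<longleftrightarrow> hermitian c \<and> (\<forall>\<xi> \<eta>. Re (tr_pair (proj1 (prodvec \<xi> \<eta>)) c) \<ge> 0)"
proof
  assume P: "choi_map c \<in> P1"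
  have "Re (tr_pair (proj1 (prodvec \<xi> \<eta>)) c) \<ge> 0" for \<xi> \<eta>
  proof -
    have "psd (choi_map c (proj1 \<eta>))" using P psd_proj1 unfolding P1_def by blast
    then have "Re (sform (choi_map c (proj1 \<eta>)) (vcnj \<xi>) (vcnj \<xi>)) \<ge> 0" by (rule psd_sformD)
    then show ?thesis by (simp add: sform_choi_map_proj1)
  qed
  then show "hermitian c \<and> (\<forall>\<xi> \<eta>. Re (tr_pair (proj1 (prodvec \<xi> \<eta>)) c) \<ge> 0)"
    using positive_choi_map_imp_hermitian[OF P] by blast
next
  assume c: "hermitian c \<and> (\<forall>\<xi> \<eta>. Re (tr_pair (proj1 (prodvec \<xi> \<eta>)) c) \<ge> 0)"
  have "psd (choi_map c X)" if "psd X" for X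
  proof -
    obtain N :: nat and \<eta> where X: "X = (\<Sum>r<N. proj1 (\<eta> r))"
      using psd_eq_sum_proj1[OF \<open>psd X\<close>] by blast
    have "sform (choi_map c X) x x = (\<Sum>r<N. tr_pair (proj1 (prodvec (vcnj x) (\<eta> r))) c)" for x
      unfolding X choi_map_sum sform_sum sform_choi_map_proj1 ..
    moreover have "tr_pair (proj1 (prodvec (vcnj x) (\<eta> r))) c \<in> \<real>" for x r
      using tr_pair_real hermitian_proj1 c by blast
    ultimately show ?thesis
      using c unfolding psd_iff_sform by (simp add: Im_sum Re_sum sum_nonneg complex_is_Real_iff)
  qed
  then show "choi_map c \<in> P1" unfolding P1_def using lin_map_choi_map by blast
qed

section \<open>The separable cone\<close>

lemma zero_in_V1: "0 \<in> V1"
  unfolding V1_def by (rule CollectI, rule exI[of _ "0::nat"]) simp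

lemma proj1_prodvec_in_V1: "proj1 (prodvec \<xi> \<eta>) \<in> V1"
  unfolding V1_def
  by (rule CollectI, rule exI[of _ "1::nat"], rule exI[of _ "\<lambda>_. \<xi>"], rule exI[of _ "\<lambda>_. \<eta>"]) simp

lemma sum_proj1_prodvec_in_V1: "(\<Sum>r<(N::nat). proj1 (prodvec (\<xi>s r) (\<eta>s r))) \<in> V1"
  unfolding V1_def by blast

lemma V1_add_proj1_prodvec: assumes "A \<in> V1" shows "A + proj1 (prodvec \<xi> \<eta>) \<in> V1"
proof -
  obtain N :: nat and \<xi>s \<eta>s where A: "A = (\<Sum>r<N. proj1 (prodvec (\<xi>s r) (\<eta>s r)))"
    using assms unfolding V1_def by blast
  have "A + proj1 (prodvec \<xi> \<eta>) = (\<Sum>r<Suc N. proj1 (prodvec ((\<xi>s(N := \<xi>)) r) ((\<eta>s(N := \<eta>)) r)))"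
    unfolding sum.lessThan_Suc A by (auto intro!: sum.cong)
  then show ?thesis by (simp only: sum_proj1_prodvec_in_V1)
qed

lemma V1_add: assumes "A \<in> V1" "B \<in> V1" shows "A + B \<in> V1"
proof -
  obtain N :: nat and \<xi>s \<eta>s where B: "B = (\<Sum>r<N. proj1 (prodvec (\<xi>s r) (\<eta>s r)))"
    using assms(2) unfolding V1_def by blast
  have "A + (\<Sum>r<n. proj1 (prodvec (\<xi>s r) (\<eta>s r))) \<in> V1" for n
  proof (induction n)
    case (Suc n)
    then show ?case using V1_add_proj1_prodvec[OF Suc] by (simp add: add.assoc)
  qed (use assms(1) in simp)
  then show ?thesis using B by simp
qed

lemma prodvec_scaleR: "prodvec (a *\<^sub>R \<xi>) (b *\<^sub>R \<eta>) = (a * b) *\<^sub>R prodvec \<xi> \<eta>"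
  unfolding prodvec_def by (simp add: vec_eq_iff)

lemma proj1_scaleR: "proj1 (a *\<^sub>R z) = (a * a) *\<^sub>R proj1 z"
  unfolding proj1_def by (simp add: vec_eq_iff)

lemma V1_scaleR: assumes "A \<in> V1" "t \<ge> 0" shows "t *\<^sub>R A \<in> V1"
proof -
  obtain N :: nat and \<xi>s \<eta>s where A: "A = (\<Sum>r<N. proj1 (prodvec (\<xi>s r) (\<eta>s r)))"
    using assms unfolding V1_def by blast
  have "t *\<^sub>R A = (\<Sum>r<N. proj1 (prodvec (sqrt t *\<^sub>R \<xi>s r) (1 *\<^sub>R \<eta>s r)))"
    unfolding A scaleR_sum_right prodvec_scaleR proj1_scaleR using assms(2) by simp
  then show ?thesis by (simp only: sum_proj1_prodvec_in_V1)
qed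

lemma convex_cone_V1: "convex_cone V1"
  unfolding convex_cone_iff by (simp add: zero_in_V1 V1_add V1_scaleR)

definition unit_product_states :: "(complex^('n::finite \<times> 'm::finite)^('n \<times> 'm)) set" where
  "unit_product_states = (\<lambda>(\<xi>, \<eta>). proj1 (prodvec \<xi> \<eta>)) ` (sphere 0 1 \<times> sphere 0 1)"

lemma compact_unit_product_states: "compact unit_product_states"
  unfolding unit_product_states_def
proof (rule compact_continuous_image)
  show "continuous_on (sphere 0 1 \<times> sphere 0 1) (\<lambda>(\<xi>::complex^'n, \<eta>::complex^'m). proj1 (prodvec \<xi> \<eta>))"
    unfolding proj1_def prodvec_def case_prod_beta by (intro continuous_intros)
qed (intro compact_Times compact_sphere)

lemma inner_mat_1: "inner (mat 1) (c::complex^'k::finite^'k) = (\<Sum>p\<in>UNIV. Re (c$p$p))"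
proof -
  have "inner (mat 1) c = (\<Sum>p\<in>UNIV. \<Sum>q\<in>UNIV. if q = p then Re (c$p$p) else 0)"
    unfolding inner_vec_def by (intro sum.cong) (auto simp: mat_def inner_complex_def)
  then show ?thesis by simp
qed

lemma norm_vec_power2: "norm (z::complex^'k::finite) ^ 2 = (\<Sum>p\<in>UNIV. Re (z$p * cnj (z$p)))"
  unfolding power2_norm_eq_inner inner_vec_def inner_complex_def by (simp add: power2_eq_square)

lemma norm_prodvec_power2: "norm (prodvec \<xi> \<eta>) ^ 2 = norm \<xi> ^ 2 * norm \<eta> ^ 2"
  unfolding norm_vec_power2 prodvec_def sum_UNIV_prod
  by (simp add: sum_product algebra_simps)

lemma inner_mat_1_proj1: "inner (mat 1) (proj1 z) = norm z ^ 2"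
  unfolding inner_mat_1 norm_vec_power2 proj1_def by simp

lemma V1_eq_convex_cone_hull: "V1 = convex_cone hull unit_product_states"
proof
  show "convex_cone hull unit_product_states \<subseteq> V1"
  proof (rule hull_minimal)
    show "unit_product_states \<subseteq> V1" by (auto simp: unit_product_states_def proj1_prodvec_in_V1)
  qed (rule convex_cone_V1)
next
  show "V1 \<subseteq> convex_cone hull unit_product_states"
  proof
    fix A assume "A \<in> V1"
    then obtain N :: nat and \<xi>s \<eta>s where A: "A = (\<Sum>r<N. proj1 (prodvec (\<xi>s r) (\<eta>s r)))"
      unfolding V1_def by blast
    have rank_one: "proj1 (prodvec \<xi> \<eta>) \<in> convex_cone hull unit_product_states" for \<xi> \<eta>
    proof (cases "\<xi> = 0 \<or> \<eta> = 0")
      case True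
      then have "proj1 (prodvec \<xi> \<eta>) = 0" unfolding proj1_def prodvec_def by (auto simp: vec_eq_iff)
      then show ?thesis using convex_cone_hull_contains_0 by simp
    next
      case False
      define a where "a = norm \<xi>"
      define b where "b = norm \<eta>"
      have ab: "a > 0" "b > 0" using False a_def b_def by auto
      have "proj1 (prodvec ((1/a) *\<^sub>R \<xi>) ((1/b) *\<^sub>R \<eta>)) \<in> unit_product_states"
        unfolding unit_product_states_def using ab a_def b_def
        by (auto intro!: image_eqI[where x="((1/a) *\<^sub>R \<xi>, (1/b) *\<^sub>R \<eta>)"])
      then have "((a*b)*(a*b)) *\<^sub>R proj1 (prodvec ((1/a) *\<^sub>R \<xi>) ((1/b) *\<^sub>R \<eta>))
                   \<in> convex_cone hull unit_product_states"
        by (intro convex_cone_hull_mul hull_inc) simp_all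
      then show ?thesis unfolding prodvec_scaleR proj1_scaleR using ab by simp
    qed
    have "(\<Sum>r<n. proj1 (prodvec (\<xi>s r) (\<eta>s r))) \<in> convex_cone hull unit_product_states" for n
      by (induction n) (simp_all add: convex_cone_hull_contains_0 convex_cone_hull_add rank_one)
    then show "A \<in> convex_cone hull unit_product_states" using A by simp
  qed
qed

text \<open>The unit product states lie in the hyperplane of trace one, so their convex hull is a compact
  base of \<open>V1\<close> avoiding the origin; a cone over such a base is closed.\<close>
lemma closed_V1: "closed V1"
proof -
  have "convex hull unit_product_states \<subseteq> {x. inner (mat 1) x = 1}"
    by (rule hull_minimal)
       (auto simp: unit_product_states_def inner_mat_1_proj1 norm_prodvec_power2 convex_hyperplane)
  then have "0 \<notin> convex hull unit_product_states" by auto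
  then have "closed (conic hull (convex hull unit_product_states))"
    using compact_convex_hull[OF compact_unit_product_states] by (blast intro: closed_conic_hull)
  then show ?thesis unfolding V1_eq_convex_cone_hull convex_cone_hull_separate by (rule closed_insert)
qed

section \<open>Entanglement witnesses\<close>

definition mconj :: "complex^'k::finite^'k \<Rightarrow> complex^'k^'k" where
  "mconj M = (\<chi> p q. cnj (M$p$q))"

definition herm_part :: "complex^'k::finite^'k \<Rightarrow> complex^'k^'k" where
  "herm_part M = (\<chi> p q. (M$p$q + cnj (M$q$p)) / 2)"

lemma hermitian_herm_part: "hermitian (herm_part M)"
  unfolding hermitian_def herm_part_def by (simp add: add.commute)

lemma tr_pair_commute: "tr_pair B c = tr_pair c B"
  unfolding tr_pair_def by (simp add: mult.commute)

lemma Re_tr_pair_eq_inner: "Re (tr_pair B c) = inner (mconj B) c"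
  unfolding tr_pair_def mconj_def inner_vec_def inner_complex_def by (simp add: Re_sum algebra_simps)

lemma Re_tr_pair_herm_part:
  assumes "hermitian B" shows "Re (tr_pair B (herm_part M)) = Re (tr_pair B M)"
proof -
  have "(\<Sum>p\<in>UNIV. \<Sum>q\<in>UNIV. B$p$q * cnj (M$q$p)) = (\<Sum>q\<in>UNIV. \<Sum>p\<in>UNIV. cnj (B$q$p * M$q$p))"
    by (subst sum.swap) (simp add: hermitianD[OF assms])
  also have "\<dots> = cnj (tr_pair B M)" unfolding tr_pair_def by simp
  finally have swap: "(\<Sum>p\<in>UNIV. \<Sum>q\<in>UNIV. B$p$q * cnj (M$q$p)) = cnj (tr_pair B M)" .
  have "2 * tr_pair B (herm_part M) = tr_pair B M + (\<Sum>p\<in>UNIV. \<Sum>q\<in>UNIV. B$p$q * cnj (M$q$p))"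
    unfolding tr_pair_def herm_part_def
    by (simp add: sum_distrib_left sum.distrib[symmetric] distrib_left[symmetric])
  then have "Re (2 * tr_pair B (herm_part M)) = Re (tr_pair B M + cnj (tr_pair B M))"
    unfolding swap by simp
  then show ?thesis by simp
qed

lemma Re_tr_pair_herm_part_mconj:
  assumes "hermitian B" shows "Re (tr_pair B (herm_part (mconj a))) = inner a B"
  unfolding Re_tr_pair_herm_part[OF assms] unfolding tr_pair_commute[of B] Re_tr_pair_eq_inner
  by (simp add: mconj_def)

lemma tr_pair_herm_part_mconj:
  assumes "hermitian c" shows "tr_pair (herm_part (mconj w)) c = of_real (inner w c)"
proof -
  have "tr_pair (herm_part (mconj w)) c \<in> \<real>"
    using tr_pair_real[OF hermitian_herm_part assms] .
  moreover have "Re (tr_pair (herm_part (mconj w)) c) = inner w c"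
    unfolding tr_pair_commute[of "herm_part _"] by (rule Re_tr_pair_herm_part_mconj[OF assms])
  ultimately show ?thesis by (metis Reals_cases Re_complex_of_real)
qed

lemma tr_pair_sum_left: "tr_pair (\<Sum>r\<in>S. B r) c = (\<Sum>r\<in>S. tr_pair (B r) c)"
  by (induction S rule: infinite_finite_induct) (auto simp: tr_pair_def algebra_simps sum.distrib)

lemma scaleR_matrix_entry: "(t *\<^sub>R c)$p$q = of_real t * (c$p$q :: complex)"
  unfolding vector_scaleR_component by (rule scaleR_conv_of_real)

lemma tr_pair_scaleR_right: "tr_pair B (t *\<^sub>R c) = of_real t * tr_pair B c"
  unfolding tr_pair_def scaleR_matrix_entry by (simp add: sum_distrib_left mult_ac)

lemma Re_tr_pair_V1_nonneg:
  assumes "A \<in> V1" "choi_map c \<in> P1" shows "Re (tr_pair A c) \<ge> 0"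
proof -
  obtain N :: nat and \<xi>s \<eta>s where A: "A = (\<Sum>r<N. proj1 (prodvec (\<xi>s r) (\<eta>s r)))"
    using assms(1) unfolding V1_def by blast
  show ?thesis
    unfolding A tr_pair_sum_left Re_sum
    using assms(2) unfolding positive_choi_map_iff by (auto intro!: sum_nonneg)
qed

lemma Re_pair_V1_nonneg:
  assumes "A \<in> V1" "\<phi> \<in> P1" shows "Re (pair A \<phi>) \<ge> 0"
proof -
  have "lin_map \<phi>" using assms(2) unfolding P1_def by blast
  then have "\<phi> = choi_map (choi \<phi>)" by (simp add: choi_map_choi)
  then show ?thesis
    using Re_tr_pair_V1_nonneg[OF assms(1), of "choi \<phi>"] assms(2) by (metis pair_choi_map)
qed

lemma entanglement_witness:
  assumes herm: "hermitian X" and "X \<notin> V1"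
  obtains c where "choi_map c \<in> P1" "Re (tr_pair X c) < 0"
proof -
  obtain a where a: "inner a X < 0" "\<And>B. B \<in> V1 \<Longrightarrow> inner a B \<ge> 0"
    using separating_hyperplane_closed_cone[OF convex_cone_V1 closed_V1 \<open>X \<notin> V1\<close>] by blast
  define c where "c = herm_part (mconj a)"
  have "Re (tr_pair (proj1 (prodvec \<xi> \<eta>)) c) \<ge> 0" for \<xi> \<eta>
    unfolding c_def Re_tr_pair_herm_part_mconj[OF hermitian_proj1] by (rule a(2)[OF proj1_prodvec_in_V1])
  then have "choi_map c \<in> P1"
    unfolding positive_choi_map_iff c_def using hermitian_herm_part by blast
  moreover have "Re (tr_pair X c) < 0"
    unfolding c_def Re_tr_pair_herm_part_mconj[OF herm] by (rule a(1))
  ultimately show ?thesis by (rule that)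
qed

section \<open>The cone of positive Choi matrices\<close>

lemma hermitian_scaleR: assumes "hermitian c" shows "hermitian (t *\<^sub>R c)"
  unfolding hermitian_def scaleR_matrix_entry by (simp add: hermitianD[OF assms])

lemma positive_choi_map_scaleR:
  assumes "choi_map c \<in> P1" "t \<ge> 0" shows "choi_map (t *\<^sub>R c) \<in> P1"
  using assms unfolding positive_choi_map_iff tr_pair_scaleR_right by (simp add: hermitian_scaleR)

lemma conic_positive_choi: "conic {c. choi_map c \<in> P1}"
  unfolding conic_def using positive_choi_map_scaleR by blast

lemma closed_hermitian: "closed {c::complex^'k::finite^'k. hermitian c}"
proof -
  have "{c::complex^'k^'k. hermitian c} = (\<Inter>p. \<Inter>q. {c. c$q$p - cnj (c$p$q) = 0})"
    unfolding hermitian_def by auto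
  also have "closed \<dots>"
    by (intro closed_INT ballI closed_Collect_eq continuous_intros)
  finally show ?thesis .
qed

lemma closed_positive_choi: "closed {c::complex^('n::finite \<times> 'm::finite)^('n \<times> 'm). choi_map c \<in> P1}"
proof -
  have "{c::complex^('n \<times> 'm)^('n \<times> 'm). choi_map c \<in> P1} = {c. hermitian c} \<inter>
          (\<Inter>\<xi>. \<Inter>\<eta>. {c. inner (mconj (proj1 (prodvec \<xi> \<eta>))) c \<ge> 0})"
    unfolding positive_choi_map_iff Re_tr_pair_eq_inner by auto
  also have "closed \<dots>"
    by (intro closed_Int closed_hermitian closed_INT ballI closed_halfspace_ge)
  finally show ?thesis .
qed

lemma positive_choi_psd_block_diag:
  assumes "choi_map c \<in> P1" shows "psd (block c i i)"
  unfolding psd_iff_sform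
proof
  fix y
  have "psd (choi_map c (proj1 (vcnj y)))" using assms psd_proj1 unfolding P1_def by blast
  moreover have "sform (block c i i) y y = sform (choi_map c (proj1 (vcnj y))) (axis i 1) (axis i 1)"
    unfolding sform_axis_axis choi_map_proj1_entry by simp
  ultimately show "Im (sform (block c i i) y y) = 0 \<and> Re (sform (block c i i) y y) \<ge> 0"
    by (simp add: psd_sformD)
qed

lemma inner_mat_1_choi: "inner (mat 1) c = (\<Sum>i\<in>UNIV. \<Sum>k\<in>UNIV. Re (block c i i $ k $ k))"
  unfolding inner_mat_1 sum_UNIV_prod block_def by simp

lemma positive_choi_trace_pos:
  assumes P: "choi_map c \<in> P1" and "c \<noteq> 0" shows "inner (mat 1) c > 0"
proof -
  have nonneg: "Re (block c i i $ k $ k) \<ge> 0" for i k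
    using psd_diag_nonneg[OF positive_choi_psd_block_diag[OF P]] .
  have "inner (mat 1) c \<noteq> 0"
  proof
    assume "inner (mat 1) c = 0"
    then have "Re (block c i i $ k $ k) = 0" for i k
      unfolding inner_mat_1_choi using nonneg by (simp add: sum_nonneg sum_nonneg_eq_0_iff)
    then have "block c i i = 0" for i
      using positive_choi_psd_block_diag[OF P] hermitian_diag_real[OF psd_hermitian]
      by (metis psd_eq_0_if_diag_eq_0 of_real_0)
    \<comment> \<open>so every image of a rank-one projector has zero diagonal, hence vanishes\<close>
    then have "choi_map c (proj1 \<eta>) = 0" for \<eta>
      using P psd_proj1 unfolding P1_def
      by (intro psd_eq_0_if_diag_eq_0) (auto simp: choi_map_proj1_entry sform_def)
    then have "sform (block c i j) y y = 0" for i j y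
      using choi_map_proj1_entry[of c "vcnj y" i j] by simp
    then have "block c i j = 0" for i j
      by (rule sform_diag_eq_0_imp_zero)
    then have "c = 0"
      by (simp add: vec_eq_iff block_def)
    then show False using \<open>c \<noteq> 0\<close> by blast
  qed
  moreover have "inner (mat 1) c \<ge> 0"
    unfolding inner_mat_1_choi using nonneg by (simp add: sum_nonneg)
  ultimately show ?thesis by simp
qed

section \<open>Exposed positive maps\<close>

lemma ray_choi_map: "ray (choi_map c) = {choi_map (t *\<^sub>R c) | t. t \<ge> 0}"
proof -
  have "(\<lambda>X. cmscale (complex_of_real t) (choi_map c X)) = choi_map (t *\<^sub>R c)" for t
    unfolding choi_map_def cmscale_def scaleR_matrix_entry
    by (simp add: vec_eq_iff sum_distrib_left mult_ac)
  then show ?thesis unfolding ray_def by simp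
qed

lemma pair_choi_map_scaleR: "pair B (choi_map (t *\<^sub>R c)) = of_real t * tr_pair B c"
  unfolding pair_choi_map tr_pair_scaleR_right ..

lemma exposed_map_choi_mapI:
  assumes P: "choi_map cs \<in> P1" and "cs \<noteq> 0" and A0: "A0 \<in> V1" "tr_pair A0 cs = 0"
    and unique: "\<And>c. choi_map c \<in> P1 \<Longrightarrow> tr_pair A0 c = 0 \<Longrightarrow> \<exists>t\<ge>0. c = t *\<^sub>R cs"
  shows "exposed_map (choi_map cs)"
proof -
  have "choi_map cs \<noteq> (\<lambda>X. 0)"
  proof
    assume "choi_map cs = (\<lambda>X. 0)"
    then have "cs = choi (\<lambda>X. 0)" by (metis choi_choi_map)
    then show False using \<open>cs \<noteq> 0\<close> by (simp add: choi_def vec_eq_iff)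
  qed
  moreover have "perpP (perpV (ray (choi_map cs))) = ray (choi_map cs)"
  proof
    have "A0 \<in> perpV (ray (choi_map cs))"
      using A0 unfolding perpV_def ray_choi_map by (auto simp: pair_choi_map_scaleR)
    show "perpP (perpV (ray (choi_map cs))) \<subseteq> ray (choi_map cs)"
    proof
      fix \<psi> assume \<psi>: "\<psi> \<in> perpP (perpV (ray (choi_map cs)))"
      then have "\<psi> \<in> P1" "pair A0 \<psi> = 0"
        using \<open>A0 \<in> perpV (ray (choi_map cs))\<close> unfolding perpP_def by auto
      moreover have \<psi>_eq: "\<psi> = choi_map (choi \<psi>)"
        using \<open>\<psi> \<in> P1\<close> unfolding P1_def by (simp add: choi_map_choi)
      ultimately obtain t where "t \<ge> 0" "choi \<psi> = t *\<^sub>R cs"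
        using unique[of "choi \<psi>"] by (metis pair_choi_map)
      then show "\<psi> \<in> ray (choi_map cs)" unfolding ray_choi_map using \<psi>_eq by auto
    qed
  next
    have "choi_map cs \<in> ray (choi_map cs)"
      unfolding ray_choi_map by (auto intro!: exI[of _ 1])
    then show "ray (choi_map cs) \<subseteq> perpP (perpV (ray (choi_map cs)))"
      using positive_choi_map_scaleR[OF P]
      unfolding ray_choi_map perpP_def perpV_def by (auto simp: pair_choi_map_scaleR pair_choi_map)
  qed
  ultimately show ?thesis using P unfolding exposed_map_def by blast
qed

lemma exposed_entanglement_witness:
  fixes A :: "complex^('n::finite \<times> 'm::finite)^('n \<times> 'm)"
  assumes "psd A" "A \<notin> V1"
  obtains \<phi> :: "complex^'m^'m \<Rightarrow> complex^'n^'n"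
  where "exposed_map \<phi>" "pair A \<phi> \<in> \<real>" "Re (pair A \<phi>) < 0"
proof -
  have herm: "hermitian A" using \<open>psd A\<close> by (rule psd_hermitian)
  obtain c1 where c1: "choi_map c1 \<in> P1" "Re (tr_pair A c1) < 0"
    using entanglement_witness[OF herm \<open>A \<notin> V1\<close>] .
  obtain cs w where cs: "choi_map cs \<in> P1" "inner (mat 1) cs = 1" "inner (mconj A) cs < 0"
      and w: "inner w cs = 0" "\<And>c. choi_map c \<in> P1 \<Longrightarrow> inner w c \<ge> 0"
        "\<And>c. choi_map c \<in> P1 \<Longrightarrow> inner w c = 0 \<Longrightarrow> c = inner (mat 1) c *\<^sub>R cs"
    using exposed_ray_in_open_halfspace[OF closed_positive_choi conic_positive_choi,
        of "mat 1" c1 "mconj A"] positive_choi_trace_pos c1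
    unfolding Re_tr_pair_eq_inner by auto
  \<comment> \<open>\<open>A0\<close> represents the exposing functional \<open>inner w\<close> on Hermitian matrices\<close>
  define A0 where "A0 = herm_part (mconj w)"
  have A0_pair: "tr_pair A0 c = of_real (inner w c)" if "choi_map c \<in> P1" for c
    unfolding A0_def using positive_choi_map_imp_hermitian[OF that] by (rule tr_pair_herm_part_mconj)
  have "A0 \<in> V1"
  proof (rule ccontr)
    assume "A0 \<notin> V1"
    then obtain c where "choi_map c \<in> P1" "Re (tr_pair A0 c) < 0"
      using entanglement_witness[OF hermitian_herm_part] unfolding A0_def by blast
    then show False using w(2) A0_pair by fastforce
  qed
  have "exposed_map (choi_map cs)"
  proof (rule exposed_map_choi_mapI[OF cs(1) _ \<open>A0 \<in> V1\<close>])
    show "cs \<noteq> 0" using cs(2) by auto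
    show "tr_pair A0 cs = 0" using A0_pair[OF cs(1)] w(1) by simp
    show "\<exists>t\<ge>0. c = t *\<^sub>R cs" if "choi_map c \<in> P1" "tr_pair A0 c = 0" for c
      using w(3)[OF that(1)] A0_pair[OF that(1)] that(2) positive_choi_trace_pos[OF that(1)]
      by (metis less_eq_real_def of_real_eq_0_iff scale_zero_left)
  qed
  moreover have "pair A (choi_map cs) \<in> \<real>"
    unfolding pair_choi_map using tr_pair_real[OF herm positive_choi_map_imp_hermitian[OF cs(1)]] .
  moreover have "Re (pair A (choi_map cs)) < 0"
    unfolding pair_choi_map Re_tr_pair_eq_inner by (rule cs(3))
  ultimately show ?thesis by (rule that)
qed

theorem mainTheorem2:
  fixes A :: "complex^('n::finite \<times> 'm::finite)^('n \<times> 'm)"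
  assumes "psd A"
  shows "A \<notin> V1 \<longleftrightarrow>
    (\<exists>\<phi> :: complex^'m^'m \<Rightarrow> complex^'n^'n.
        exposed_map \<phi> \<and> pair A \<phi> \<in> \<real> \<and> Re (pair A \<phi>) < 0)"
proof
  assume "A \<notin> V1"
  then show "\<exists>\<phi> :: complex^'m^'m \<Rightarrow> complex^'n^'n. exposed_map \<phi> \<and> pair A \<phi> \<in> \<real> \<and> Re (pair A \<phi>) < 0"
    using exposed_entanglement_witness[OF assms] by blast
next
  assume "\<exists>\<phi> :: complex^'m^'m \<Rightarrow> complex^'n^'n. exposed_map \<phi> \<and> pair A \<phi> \<in> \<real> \<and> Re (pair A \<phi>) < 0"
  then show "A \<notin> V1"
    using Re_pair_V1_nonneg unfolding exposed_map_def by fastforce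
qed

end
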